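(* Let $X$ be a proper geodesic metric space which is coarsely path-connected, let $\alpha:\mathbb{R}_+\to X$ be a coarse $\mathbb{R}_+$-basepoint, and set $p=\alpha(0)$. Let $A\subseteq X$ be a dispersed set. Then there exist functions $\gamma,\rho:\mathbb{R}_+\to\mathbb{R}_+$ such that (1) $\gamma(R)>R$ for all $R>0$; and (2) for every $R>0$ and every $x\in A\setminus B_p(\gamma(R))$ there is a path $h_x:[0,k_x]\to X$ with (a) $h_x(0)=x$ and $h_x(k_x)\in\mathrm{Im}(\alpha)$; (b) $\mathrm{Im}(h_x)\cap B_p(R)=\emptyset$; (c) $h_x$ is $\rho$-bornologous; (d) $k_x\le 2\|x\|$, where $\|x\|=d(x,p)$.
   Context: Notation: $\mathbb{R}_+=[0,\infty)$, $B_p(r)=\{x:d(x,p)<r\}$. A (not necessarily continuous) map is controlled if for every $r>0$ there is $S>0$ with $d(x,x')<r\Rightarrow d(f(x),f(x'))<S$; proper if preimages of bounded sets are bounded; coarse if both. A map $f$ is $\rho$-bornologous if $d(f(x),f(x'))\le\rho(d(x,x'))$ for all $x,x'$. For a coarse $q:Z\to\mathbb{R}_+$, $I_qZ=\{(z,t)\in Z\times\mathbb{R}_+: t\le q(z)\}$ (product sup metric), $i_0(z)=(z,0)$, $i_1(z)=(z,q(z))$; coarse maps $f,g:Z\to X$ are coarsely homotopic if there exist a coarse $q$ and a coarse $H:I_qZ\to X$ with $H\circ i_0=f$, $H\circ i_1=g$. A coarse $\mathbb{R}_+$-basepoint is a coarse map $\mathbb{R}_+\to X$ close to a quasi-geodesic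 ray; $X$ is coarsely path-connected if any two coarse $\mathbb{R}_+$-basepoints are coarsely homotopic. A discrete subset $A\subseteq X$ is dispersed if $\partial(r)=\inf\{d(x_1,x_2): x_1\ne x_2\in A\setminus B_p(r)\}\to\infty$ as $r\to\infty$. *)

theory Defs
  imports "HOL-Analysis.Analysis"
begin

definition bounded_wrt :: "('a \<Rightarrow> 'a \<Rightarrow> real) \<Rightarrow> 'a set \<Rightarrow> bool" where
  "bounded_wrt d S \<longleftrightarrow> (\<exists>r. \<forall>x\<in>S. \<forall>y\<in>S. d x y \<le> r)"

definition controlled_wrt ::
  "('a \<Rightarrow> 'a \<Rightarrow> real) \<Rightarrow> ('b \<Rightarrow> 'b \<Rightarrow> real) \<Rightarrow> 'a set \<Rightarrow> ('a \<Rightarrow> 'b) \<Rightarrow> bool" where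
  "controlled_wrt d1 d2 S f \<longleftrightarrow>
     (\<forall>r>0. \<exists>C>0. \<forall>x\<in>S. \<forall>x'\<in>S. d1 x x' < r \<longrightarrow> d2 (f x) (f x') < C)"

definition cproper_wrt ::
  "('a \<Rightarrow> 'a \<Rightarrow> real) \<Rightarrow> ('b \<Rightarrow> 'b \<Rightarrow> real) \<Rightarrow> 'a set \<Rightarrow> ('a \<Rightarrow> 'b) \<Rightarrow> bool" where
  "cproper_wrt d1 d2 S f \<longleftrightarrow>
     (\<forall>B. bounded_wrt d2 B \<longrightarrow> bounded_wrt d1 {x\<in>S. f x \<in> B})"

definition coarse_wrt ::
  "('a \<Rightarrow> 'a \<Rightarrow> real) \<Rightarrow> ('b \<Rightarrow> 'b \<Rightarrow> real) \<Rightarrow> 'a set \<Rightarrow> ('a \<Rightarrow> 'b) \<Rightarrow> bool" where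
  "coarse_wrt d1 d2 S f \<longleftrightarrow> controlled_wrt d1 d2 S f \<and> cproper_wrt d1 d2 S f"

definition supdist :: "real \<times> real \<Rightarrow> real \<times> real \<Rightarrow> real" where
  "supdist u v = max \<bar>fst u - fst v\<bar> \<bar>snd u - snd v\<bar>"

definition Iq :: "(real \<Rightarrow> real) \<Rightarrow> (real \<times> real) set" where
  "Iq q = {(z, t). 0 \<le> z \<and> 0 \<le> t \<and> t \<le> q z}"

definition coarsely_homotopic :: "(real \<Rightarrow> 'a::metric_space) \<Rightarrow> (real \<Rightarrow> 'a) \<Rightarrow> bool" where
  "coarsely_homotopic f g \<longleftrightarrow>
     (\<exists>q H. (\<forall>z\<ge>0. q z \<ge> 0) \<and> coarse_wrt dist dist {0..} q \<and>
            coarse_wrt supdist dist (Iq q) H \<and>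
            (\<forall>z\<ge>0. H (z, 0) = f z) \<and> (\<forall>z\<ge>0. H (z, q z) = g z))"

definition quasi_geodesic_ray :: "(real \<Rightarrow> 'a::metric_space) \<Rightarrow> bool" where
  "quasi_geodesic_ray \<beta> \<longleftrightarrow>
     (\<exists>L c. L \<ge> 1 \<and> c \<ge> 0 \<and> (\<forall>s\<ge>0. \<forall>t\<ge>0.
        \<bar>s - t\<bar> / L - c \<le> dist (\<beta> s) (\<beta> t) \<and> dist (\<beta> s) (\<beta> t) \<le> L * \<bar>s - t\<bar> + c))"

definition coarse_basepoint :: "(real \<Rightarrow> 'a::metric_space) \<Rightarrow> bool" where
  "coarse_basepoint \<alpha> \<longleftrightarrow> coarse_wrt dist dist {0..} \<alpha> \<and>
     (\<exists>\<beta> C. quasi_geodesic_ray \<beta> \<and> (\<forall>t\<ge>0. dist (\<alpha> t) (\<beta> t) \<le> C))"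

definition coarsely_path_connected :: "'a::metric_space itself \<Rightarrow> bool" where
  "coarsely_path_connected (_::'a itself) \<longleftrightarrow>
     (\<forall>f g :: real \<Rightarrow> 'a. coarse_basepoint f \<and> coarse_basepoint g \<longrightarrow> coarsely_homotopic f g)"

definition proper_metric :: "'a::metric_space itself \<Rightarrow> bool" where
  "proper_metric (_::'a itself) \<longleftrightarrow> (\<forall>x::'a. \<forall>r. compact (cball x r))"

definition geodesic_space :: "'a::metric_space itself \<Rightarrow> bool" where
  "geodesic_space (_::'a itself) \<longleftrightarrow>
     (\<forall>x y::'a. \<exists>g. g 0 = x \<and> g (dist x y) = y \<and>
        (\<forall>s\<in>{0..dist x y}. \<forall>t\<in>{0..dist x y}. dist (g s) (g t) = \<bar>s - t\<bar>))"

definition discrete_set :: "'a::metric_space set \<Rightarrow> bool" where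
  "discrete_set A \<longleftrightarrow> (\<forall>x\<in>A. \<exists>e>0. \<forall>y\<in>A. dist x y < e \<longrightarrow> y = x)"

text \<open>Dispersed w.r.t. p: the infimum of distances between distinct points of A outside
  B_p(r) tends to infinity (empty infimum = +infinity).\<close>
definition dispersed :: "'a::metric_space \<Rightarrow> 'a set \<Rightarrow> bool" where
  "dispersed p A \<longleftrightarrow> discrete_set A \<and>
     (\<forall>M. \<exists>r0. \<forall>r\<ge>r0. \<forall>x1\<in>A - ball p r. \<forall>x2\<in>A - ball p r. x1 \<noteq> x2 \<longrightarrow> M \<le> dist x1 x2)"

definition bornologous_on :: "real set \<Rightarrow> (real \<Rightarrow> real) \<Rightarrow> (real \<Rightarrow> 'a::metric_space) \<Rightarrow> bool" where
  "bornologous_on S \<rho> h \<longleftrightarrow> (\<forall>s\<in>S. \<forall>t\<in>S. dist (h s) (h t) \<le> \<rho> (dist s t))"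

end

theory Submission
  imports Defs
begin

(* Call two points outside the closed ball of radius R about p = \<alpha> 0 connected if a 1-Lipschitz
  path outside that ball joins them. The heart of the proof is that every unbounded component meets
  Im \<alpha>. Using properness, one extracts from such a component a geodesic ray \<xi> from p all of whose
  far points lie in the component; \<xi> is a coarse basepoint, hence coarsely homotopic to \<alpha>. By
  properness of the homotopy H, for large z the slice t \<mapsto> H (z, t) stays far from p and moves
  in bounded steps, which short geodesics join up outside the ball: so \<xi> z is connected to \<alpha> z.
  Compactness of the sphere of radius R + 2 then gives uniform bounds: each of its points either
  reaches Im \<alpha> by a path of length at most L R, or lies in a component within distance M R of p.
  A point x with d(x, p) \<ge> max (R + 3) (M R + 1) (L R) descends radially to that sphere and then
  follows such a path. *)

definition path_outside :: "'a::metric_space \<Rightarrow> real \<Rightarrow> real \<Rightarrow> 'a \<Rightarrow> 'a \<Rightarrow> bool" where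
  "path_outside p R l y z \<longleftrightarrow> 0 \<le> l \<and>
     (\<exists>g. g 0 = y \<and> g l = z \<and> 1-lipschitz_on {0..l} g \<and> (\<forall>t\<in>{0..l}. R < dist (g t) p))"

definition outside_connected :: "'a::metric_space \<Rightarrow> real \<Rightarrow> 'a \<Rightarrow> 'a \<Rightarrow> bool" where
  "outside_connected p R y z \<longleftrightarrow> (\<exists>l. path_outside p R l y z)"

lemma path_outside_refl: "R < dist y p \<Longrightarrow> path_outside p R 0 y y"
  unfolding path_outside_def by (intro conjI exI[of _ "\<lambda>_. y"]) (auto intro: lipschitz_intros)

lemma path_outside_join:
  assumes "path_outside p R l1 y z" "path_outside p R l2 z w"
  shows "path_outside p R (l1 + l2) y w"
proof -
  obtain g1 where g1: "0 \<le> l1" "g1 0 = y" "g1 l1 = z" "1-lipschitz_on {0..l1} g1"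
      "\<forall>t\<in>{0..l1}. R < dist (g1 t) p"
    using assms(1) unfolding path_outside_def by blast
  obtain g2 where g2: "0 \<le> l2" "g2 0 = z" "g2 l2 = w" "1-lipschitz_on {0..l2} g2"
      "\<forall>t\<in>{0..l2}. R < dist (g2 t) p"
    using assms(2) unfolding path_outside_def by blast
  have shifted: "1-lipschitz_on {l1..l1 + l2} (\<lambda>t. g2 (t - l1))"
  proof (rule lipschitz_onI)
    fix s t assume "s \<in> {l1..l1 + l2}" "t \<in> {l1..l1 + l2}"
    then show "dist (g2 (s - l1)) (g2 (t - l1)) \<le> 1 * dist s t"
      using lipschitz_onD[OF g2(4), of "s - l1" "t - l1"] by (auto simp: dist_real_def)
  qed simp
  have "g1 l1 = g2 (l1 - l1)" using g1(3) g2(2) by simp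
  from lipschitz_on_concat[OF g1(4) shifted this] show ?thesis
    unfolding path_outside_def using g1 g2
    by (intro conjI exI[of _ "\<lambda>t. if t \<le> l1 then g1 t else g2 (t - l1)"]) auto
qed

lemma path_outside_reverse:
  assumes "path_outside p R l y z"
  shows "path_outside p R l z y"
proof -
  obtain g where g: "0 \<le> l" "g 0 = y" "g l = z" "1-lipschitz_on {0..l} g"
      "\<forall>t\<in>{0..l}. R < dist (g t) p"
    using assms unfolding path_outside_def by blast
  have "1-lipschitz_on {0..l} (\<lambda>t. g (l - t))"
  proof (rule lipschitz_onI)
    fix s t assume "s \<in> {0..l}" "t \<in> {0..l}"
    then show "dist (g (l - s)) (g (l - t)) \<le> 1 * dist s t"
      using lipschitz_onD[OF g(4), of "l - s" "l - t"] by (auto simp: dist_real_def)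
  qed simp
  then show ?thesis
    unfolding path_outside_def using g by (intro conjI exI[of _ "\<lambda>t. g (l - t)"]) auto
qed

lemma outside_connected_trans:
  "outside_connected p R y z \<Longrightarrow> outside_connected p R z w \<Longrightarrow> outside_connected p R y w"
  unfolding outside_connected_def using path_outside_join by blast

lemma outside_connected_sym: "outside_connected p R y z \<Longrightarrow> outside_connected p R z y"
  unfolding outside_connected_def using path_outside_reverse by blast

lemma geodesic_point_between:
  fixes x y :: "'a::metric_space"
  assumes "geodesic_space TYPE('a)" "0 \<le> t" "t \<le> dist x y"
  shows "\<exists>w. dist x w = t \<and> dist w y = dist x y - t"
proof -
  obtain g where g: "g 0 = x" "g (dist x y) = y"
      "\<forall>s\<in>{0..dist x y}. \<forall>u\<in>{0..dist x y}. dist (g s) (g u) = \<bar>s - u\<bar>"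
    using assms(1) unfolding geodesic_space_def by blast
  show ?thesis
    using g(3)[rule_format, of 0 t] g(3)[rule_format, of t "dist x y"] g(1,2) assms(2,3)
    by (intro exI[of _ "g t"]) auto
qed

lemma path_outside_geodesic:
  fixes y z :: "'a::metric_space"
  assumes "geodesic_space TYPE('a)"
    and "\<And>v. dist y v + dist v z = dist y z \<Longrightarrow> R < dist v p"
  shows "path_outside p R (dist y z) y z"
proof -
  obtain g where g: "g 0 = y" "g (dist y z) = z"
      "\<forall>s\<in>{0..dist y z}. \<forall>t\<in>{0..dist y z}. dist (g s) (g t) = \<bar>s - t\<bar>"
    using assms(1) unfolding geodesic_space_def by blast
  have "1-lipschitz_on {0..dist y z} g"
    using g(3) by (intro lipschitz_onI) (auto simp: dist_real_def)
  moreover have "R < dist (g t) p" if "t \<in> {0..dist y z}" for t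
    using assms(2) g(3)[rule_format, of 0 t] g(3)[rule_format, of t "dist y z"] g(1,2) that
    by auto
  ultimately show ?thesis unfolding path_outside_def using g(1,2) by auto
qed

lemma path_outside_short:
  fixes y z :: "'a::metric_space"
  assumes "geodesic_space TYPE('a)" "R + dist y z < dist y p"
  shows "path_outside p R (dist y z) y z"
proof (rule path_outside_geodesic[OF assms(1)])
  fix v assume "dist y v + dist v z = dist y z"
  then show "R < dist v p"
    using assms(2) dist_triangle[of y p v] zero_le_dist[of v z] by linarith
qed

lemma path_outside_toward_center:
  fixes x p :: "'a::metric_space"
  assumes "geodesic_space TYPE('a)" "0 \<le> r" "R < r" "r \<le> dist x p"
  shows "\<exists>y. dist y p = r \<and> path_outside p R (dist x p - r) x y"
proof -
  obtain y where y: "dist x y = dist x p - r" "dist y p = r"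
    using geodesic_point_between[OF assms(1), of "dist x p - r" x p] assms(2,4) by auto
  have "path_outside p R (dist x y) x y"
  proof (rule path_outside_geodesic[OF assms(1)])
    fix v assume "dist x v + dist v y = dist x y"
    then show "R < dist v p"
      using y assms(3) dist_triangle[of x p v] zero_le_dist[of v y] by linarith
  qed
  then show ?thesis using y by auto
qed

(* If dist y p = r, this says that y lies, up to any \<epsilon>, on a geodesic from p to arbitrarily
  distant points of the component of y0. *)
definition points_toward :: "'a::metric_space \<Rightarrow> real \<Rightarrow> 'a \<Rightarrow> real \<Rightarrow> 'a \<Rightarrow> bool" where
  "points_toward p R y0 r y \<longleftrightarrow> (\<forall>M \<epsilon>. 0 < \<epsilon> \<longrightarrow>
     (\<exists>z. outside_connected p R y0 z \<and> M \<le> dist z p \<and> r + dist y z \<le> dist z p + \<epsilon>))"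

lemma points_toward_le_dist:
  assumes "points_toward p R y0 r y"
  shows "r \<le> dist y p"
proof (rule field_le_epsilon)
  fix \<epsilon> :: real assume "0 < \<epsilon>"
  then obtain z where "r + dist y z \<le> dist z p + \<epsilon>"
    using assms unfolding points_toward_def by blast
  then show "r \<le> dist y p + \<epsilon>" using dist_triangle[of z p y] by (simp add: dist_commute)
qed

lemma points_toward_limit:
  assumes "ys \<longlonglongrightarrow> y"
    and "\<And>M \<epsilon>. 0 < \<epsilon> \<Longrightarrow> eventually (\<lambda>j. \<exists>z. outside_connected p R y0 z \<and> M \<le> dist z p \<and>
           r + dist (ys j) z \<le> dist z p + \<epsilon>) sequentially"
  shows "points_toward p R y0 r y"
  unfolding points_toward_def
proof (intro allI impI)
  fix M \<epsilon> :: real assume "0 < \<epsilon>"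
  then have "eventually (\<lambda>j. dist (ys j) y < \<epsilon> / 2 \<and> (\<exists>z. outside_connected p R y0 z \<and>
      M \<le> dist z p \<and> r + dist (ys j) z \<le> dist z p + \<epsilon> / 2)) sequentially"
    using tendstoD[OF assms(1), of "\<epsilon> / 2"] assms(2)[of "\<epsilon> / 2" M] by (simp add: eventually_conj)
  then obtain j z where "dist (ys j) y < \<epsilon> / 2" "outside_connected p R y0 z" "M \<le> dist z p"
      "r + dist (ys j) z \<le> dist z p + \<epsilon> / 2"
    using eventually_happens'[OF sequentially_bot] by blast
  then show "\<exists>z. outside_connected p R y0 z \<and> M \<le> dist z p \<and> r + dist y z \<le> dist z p + \<epsilon>"
    using dist_triangle[of y z "ys j"] by (intro exI[of _ z]) (simp add: dist_commute)
qed

lemma points_toward_step: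
  fixes y :: "'a::metric_space"
  assumes "geodesic_space TYPE('a)" "proper_metric TYPE('a)"
    and "points_toward p R y0 r y" "dist y p = r"
  shows "\<exists>w. dist y w = 1 \<and> dist w p = r + 1 \<and> points_toward p R y0 (r + 1) w"
proof -
  have "\<forall>j::nat. \<exists>z. outside_connected p R y0 z \<and> r + 1 + real j \<le> dist z p \<and>
      r + dist y z \<le> dist z p + inverse (real (Suc j))"
    using assms(3) unfolding points_toward_def by auto
  then obtain zs where zs: "\<And>j. outside_connected p R y0 (zs j)"
      "\<And>j. r + 1 + real j \<le> dist (zs j) p"
      "\<And>j. r + dist y (zs j) \<le> dist (zs j) p + inverse (real (Suc j))"
    by metis
  have "\<forall>j. \<exists>w. dist y w = 1 \<and> dist w (zs j) = dist y (zs j) - 1"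
  proof
    fix j
    have "1 \<le> dist y (zs j)"
      using zs(2)[of j] assms(4) dist_triangle[of "zs j" p y] by (simp add: dist_commute)
    then show "\<exists>w. dist y w = 1 \<and> dist w (zs j) = dist y (zs j) - 1"
      using geodesic_point_between[OF assms(1)] by simp
  qed
  then obtain ws where ws: "\<And>j. dist y (ws j) = 1" "\<And>j. dist (ws j) (zs j) = dist y (zs j) - 1"
    by metis
  have "seq_compact (cball y 1)"
    using assms(2) unfolding proper_metric_def by (blast intro: compact_imp_seq_compact)
  then obtain w \<sigma> where w: "dist y w \<le> 1" "strict_mono \<sigma>" "(ws \<circ> \<sigma>) \<longlonglongrightarrow> w"
    using ws(1) by (metis mem_cball order_refl seq_compactE)
  have "eventually (\<lambda>j. \<exists>z. outside_connected p R y0 z \<and> M \<le> dist z p \<and>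
      r + 1 + dist (ws j) z \<le> dist z p + \<epsilon>) sequentially" if "0 < \<epsilon>" for M \<epsilon>
  proof -
    have "eventually (\<lambda>j. M \<le> real j) sequentially"
      using filterlim_real_sequentially by (simp add: filterlim_at_top)
    moreover have "eventually (\<lambda>j. inverse (real (Suc j)) < \<epsilon>) sequentially"
      using LIMSEQ_inverse_real_of_nat that by (rule order_tendstoD)
    ultimately show ?thesis
    proof eventually_elim
      case (elim j)
      then show ?case
        using zs[of j] ws(2)[of j] assms(4) zero_le_dist[of y p] by (intro exI[of _ "zs j"]) auto
    qed
  qed
  then have "points_toward p R y0 (r + 1) w"
    using w(2,3) by (intro points_toward_limit[of "ws \<circ> \<sigma>"]) (auto intro: eventually_subseq)
  moreover from this have "dist y w = 1" "dist w p = r + 1"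
    using points_toward_le_dist w(1) assms(4) dist_triangle[of w p y] dist_triangle[of y p w]
    by (fastforce simp: dist_commute)+
  ultimately show ?thesis by blast
qed

lemma points_toward_imp_outside_connected:
  fixes y :: "'a::metric_space"
  assumes "geodesic_space TYPE('a)" "points_toward p R y0 r y" "dist y p = r" "R + 1 \<le> r"
  shows "outside_connected p R y0 y"
proof -
  obtain z where z: "outside_connected p R y0 z" "r + dist y z \<le> dist z p + 1 / 2"
    using assms(2)[unfolded points_toward_def, rule_format, of "1 / 2" 0] by auto
  have "path_outside p R (dist y z) y z"
  proof (rule path_outside_geodesic[OF assms(1)])
    fix v assume "dist y v + dist v z = dist y z"
    then show "R < dist v p"
      using z(2) assms(4) dist_triangle[of z p v] dist_commute[of z v] zero_le_dist[of y v]
      by linarith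
  qed
  then show ?thesis
    using z(1) outside_connected_sym outside_connected_trans unfolding outside_connected_def by blast
qed

lemma ray_toward_unbounded_component:
  fixes p :: "'a::metric_space"
  assumes "geodesic_space TYPE('a)" "proper_metric TYPE('a)"
    and "\<forall>M. \<exists>z. outside_connected p R y0 z \<and> M \<le> dist z p"
  shows "\<exists>\<xi>::nat \<Rightarrow> 'a. \<forall>n. dist (\<xi> n) p = real n \<and> dist (\<xi> n) (\<xi> (Suc n)) = 1 \<and>
           points_toward p R y0 (real n) (\<xi> n)"
proof -
  define P where "P n y \<longleftrightarrow> dist y p = real n \<and> points_toward p R y0 (real n) y" for n y
  have "P 0 p" using assms(3) unfolding P_def points_toward_def by (auto simp: dist_commute)
  have "\<forall>n y. \<exists>w. P n y \<longrightarrow> P (Suc n) w \<and> dist y w = 1"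
    using points_toward_step[OF assms(1,2)] unfolding P_def by (metis add.commute of_nat_Suc)
  then obtain F where F: "\<And>n y. P n y \<Longrightarrow> P (Suc n) (F n y) \<and> dist y (F n y) = 1"
    by metis
  define \<xi> where "\<xi> = rec_nat p F"
  have "P n (\<xi> n)" for n
    by (induction n) (simp_all add: \<xi>_def \<open>P 0 p\<close> F)
  then show ?thesis using F unfolding P_def \<xi>_def by (intro exI[of _ \<xi>]) (simp add: \<xi>_def)
qed

lemma dist_unit_step_ray:
  fixes \<xi> :: "nat \<Rightarrow> 'a::metric_space"
  assumes "\<And>n. dist (\<xi> n) p = real n" "\<And>n. dist (\<xi> n) (\<xi> (Suc n)) = 1"
  shows "dist (\<xi> m) (\<xi> n) = \<bar>real m - real n\<bar>"
proof -
  have steps: "dist (\<xi> m) (\<xi> (m + k)) \<le> real k" for m k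
  proof (induction k)
    case (Suc k)
    then show ?case
      using dist_triangle[of "\<xi> m" "\<xi> (Suc (m + k))" "\<xi> (m + k)"] assms(2)[of "m + k"] by simp
  qed simp
  have "dist (\<xi> m) (\<xi> n) \<le> \<bar>real m - real n\<bar>"
    using steps[of m "n - m"] steps[of n "m - n"] by (cases "m \<le> n") (auto simp: dist_commute)
  moreover have "\<bar>real m - real n\<bar> \<le> dist (\<xi> m) (\<xi> n)"
    using assms(1)[of m] assms(1)[of n] dist_triangle[of "\<xi> m" p "\<xi> n"]
      dist_triangle[of "\<xi> n" p "\<xi> m"] by (simp add: dist_commute abs_le_iff)
  ultimately show ?thesis by simp
qed

lemma floor_diff_close: "\<bar>(of_int \<lfloor>s\<rfloor> - of_int \<lfloor>t\<rfloor>) - (s - t)\<bar> < (1::real)"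
  using floor_correct[of s] floor_correct[of t] unfolding abs_less_iff by linarith

lemma coarse_basepoint_nat_isometric:
  fixes \<xi> :: "nat \<Rightarrow> 'a::metric_space"
  assumes "\<And>m n. dist (\<xi> m) (\<xi> n) = \<bar>real m - real n\<bar>"
  shows "coarse_basepoint (\<lambda>t. \<xi> (nat \<lfloor>t\<rfloor>))" (is "coarse_basepoint ?\<beta>")
proof -
  have close: "\<bar>dist (?\<beta> s) (?\<beta> t) - dist s t\<bar> < 1" if "0 \<le> s" "0 \<le> t" for s t
    using assms that floor_diff_close[of s t] abs_triangle_ineq3[of "of_int \<lfloor>s\<rfloor> - of_int \<lfloor>t\<rfloor>" "s - t"]
    by (simp add: dist_real_def)
  have "quasi_geodesic_ray ?\<beta>"
    unfolding quasi_geodesic_ray_def using close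
    by (intro exI[of _ 1]) (force simp: dist_real_def abs_less_iff)
  moreover have "controlled_wrt dist dist {0..} ?\<beta>"
    unfolding controlled_wrt_def
  proof (intro allI impI)
    fix r :: real assume "0 < r"
    then show "\<exists>C>0. \<forall>s\<in>{0..}. \<forall>t\<in>{0..}. dist s t < r \<longrightarrow> dist (?\<beta> s) (?\<beta> t) < C"
      using close by (intro exI[of _ "r + 1"]) (force simp: abs_less_iff)
  qed
  moreover have "cproper_wrt dist dist {0..} ?\<beta>"
    unfolding cproper_wrt_def bounded_wrt_def
  proof (intro allI impI)
    fix B :: "'a set" assume "\<exists>r. \<forall>x\<in>B. \<forall>y\<in>B. dist x y \<le> r"
    then obtain r where "\<forall>x\<in>B. \<forall>y\<in>B. dist x y \<le> r" by blast
    then show "\<exists>r. \<forall>s\<in>{s \<in> {0..}. ?\<beta> s \<in> B}. \<forall>t\<in>{s \<in> {0..}. ?\<beta> s \<in> B}. dist s t \<le> r"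
      using close by (intro exI[of _ "r + 1"]) (force simp: abs_less_iff)
  qed
  ultimately show ?thesis
    unfolding coarse_basepoint_def coarse_wrt_def by (auto intro!: exI[of _ ?\<beta>])
qed

lemma bounded_wrt_supdist_fst:
  assumes "bounded_wrt supdist S"
  shows "\<exists>Z. \<forall>u\<in>S. fst u < Z"
proof (cases "S = {}")
  case False
  then obtain u0 where "u0 \<in> S" by blast
  moreover obtain D where "\<forall>u\<in>S. \<forall>v\<in>S. supdist u v \<le> D"
    using assms unfolding bounded_wrt_def by blast
  ultimately show ?thesis
    unfolding supdist_def by (intro exI[of _ "fst u0 + D + 1"]) force
qed simp

lemma outside_connected_chain:
  fixes c :: "real \<Rightarrow> 'a::metric_space"
  assumes "geodesic_space TYPE('a)" "0 < \<delta>" "0 \<le> T"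
    and small: "\<And>s t. s \<in> {0..T} \<Longrightarrow> t \<in> {0..T} \<Longrightarrow> \<bar>s - t\<bar> \<le> \<delta> \<Longrightarrow> dist (c s) (c t) < C"
    and far: "\<And>t. t \<in> {0..T} \<Longrightarrow> R + C < dist (c t) p"
  shows "outside_connected p R (c 0) (c T)"
proof -
  have "\<forall>t\<in>{0..T}. t \<le> real k * \<delta> \<longrightarrow> outside_connected p R (c 0) (c t)" for k :: nat
  proof (induction k)
    case 0
    have "R < dist (c 0) p" using small[of 0 0] far[of 0] assms(2,3) by simp
    then show ?case using path_outside_refl unfolding outside_connected_def by force
  next
    case (Suc k)
    show ?case
    proof (intro ballI impI)
      fix t assume t: "t \<in> {0..T}" "t \<le> real (Suc k) * \<delta>"
      show "outside_connected p R (c 0) (c t)"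
      proof (cases "t \<le> real k * \<delta>")
        case True
        with Suc t show ?thesis by blast
      next
        case False
        define t' where "t' = real k * \<delta>"
        have t': "t' \<in> {0..T}" "\<bar>t' - t\<bar> \<le> \<delta>"
          using t False assms(2) unfolding t'_def by (auto simp: algebra_simps)
        have "path_outside p R (dist (c t') (c t)) (c t') (c t)"
          using small[OF t'(1) t(1) t'(2)] far[OF t'(1)] by (intro path_outside_short[OF assms(1)]) auto
        moreover have "outside_connected p R (c 0) (c t')"
          using Suc t' unfolding t'_def by blast
        ultimately show ?thesis
          using outside_connected_trans unfolding outside_connected_def by blast
      qed
    qed
  qed
  moreover obtain k :: nat where "T / \<delta> \<le> real k" using real_arch_simple by blast
  then have "T \<le> real k * \<delta>" using assms(2) by (simp add: divide_le_eq)
  ultimately show ?thesis using assms(3) by auto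
qed

lemma coarse_homotopy_outside_connected:
  fixes f g :: "real \<Rightarrow> 'a::metric_space"
  assumes "geodesic_space TYPE('a)" "coarsely_homotopic f g"
  shows "\<exists>z\<ge>Z0. outside_connected p R (f z) (g z)"
proof -
  obtain q H where qH: "\<forall>z\<ge>0. 0 \<le> q z" "coarse_wrt supdist dist (Iq q) H"
      "\<forall>z\<ge>0. H (z, 0) = f z" "\<forall>z\<ge>0. H (z, q z) = g z"
    using assms(2) unfolding coarsely_homotopic_def by blast
  obtain C where C: "\<forall>u\<in>Iq q. \<forall>v\<in>Iq q. supdist u v < 1 \<longrightarrow> dist (H u) (H v) < C"
    using qH(2) unfolding coarse_wrt_def controlled_wrt_def by (meson zero_less_one)
  have "bounded_wrt dist (cball p (R + C))"
    unfolding bounded_wrt_def using bounded_cball bounded_two_points by blast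
  then obtain Z where Z: "\<And>u. u \<in> Iq q \<Longrightarrow> H u \<in> cball p (R + C) \<Longrightarrow> fst u < Z"
    using qH(2) bounded_wrt_supdist_fst unfolding coarse_wrt_def cproper_wrt_def by blast
  define z where "z = max Z0 (max Z 0)"
  have slice: "(z, t) \<in> Iq q" if "t \<in> {0..q z}" for t
    using that unfolding Iq_def z_def by auto
  have "outside_connected p R (H (z, 0)) (H (z, q z))"
  proof (rule outside_connected_chain[OF assms(1), where c = "\<lambda>t. H (z, t)" and \<delta> = "1 / 2"])
    fix s t assume "s \<in> {0..q z}" "t \<in> {0..q z}" "\<bar>s - t\<bar> \<le> 1 / 2"
    then show "dist (H (z, s)) (H (z, t)) < C"
      using C slice unfolding supdist_def by simp
  next
    fix t assume "t \<in> {0..q z}"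
    then show "R + C < dist (H (z, t)) p"
      using Z[OF slice] unfolding z_def by (force simp: dist_commute)
  qed (use qH(1) z_def in auto)
  moreover have "0 \<le> z" "Z0 \<le> z" unfolding z_def by auto
  ultimately show ?thesis using qH(3,4) by auto
qed

lemma unbounded_outside_component_meets_basepoint:
  fixes \<alpha> :: "real \<Rightarrow> 'a::metric_space"
  assumes "proper_metric TYPE('a)" "geodesic_space TYPE('a)"
    and "coarsely_path_connected TYPE('a)" "coarse_basepoint \<alpha>"
    and "\<forall>M. \<exists>z. outside_connected (\<alpha> 0) R y0 z \<and> M \<le> dist z (\<alpha> 0)"
  shows "\<exists>s\<ge>0. outside_connected (\<alpha> 0) R y0 (\<alpha> s)"
proof -
  obtain \<xi> :: "nat \<Rightarrow> 'a" where \<xi>: "\<And>n. dist (\<xi> n) (\<alpha> 0) = real n"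
      "\<And>n. dist (\<xi> n) (\<xi> (Suc n)) = 1" "\<And>n. points_toward (\<alpha> 0) R y0 (real n) (\<xi> n)"
    using ray_toward_unbounded_component[OF assms(2,1,5)] by blast
  define \<beta> where "\<beta> t = \<xi> (nat \<lfloor>t\<rfloor>)" for t :: real
  have "coarse_basepoint \<beta>"
    unfolding \<beta>_def by (rule coarse_basepoint_nat_isometric) (rule dist_unit_step_ray[OF \<xi>(1,2)])
  then have "coarsely_homotopic \<beta> \<alpha>"
    using assms(3,4) unfolding coarsely_path_connected_def by blast
  then obtain z where z: "max (R + 2) 0 \<le> z" "outside_connected (\<alpha> 0) R (\<beta> z) (\<alpha> z)"
    using coarse_homotopy_outside_connected[OF assms(2)] by blast
  have "R + 1 \<le> real (nat \<lfloor>z\<rfloor>)" using z(1) by linarith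
  then have "outside_connected (\<alpha> 0) R y0 (\<beta> z)"
    unfolding \<beta>_def using points_toward_imp_outside_connected[OF assms(2) \<xi>(3,1)] by blast
  then show ?thesis using z(1) outside_connected_trans[OF _ z(2)] by auto
qed

lemma uniform_dichotomy_on_sphere:
  fixes p :: "'a::metric_space" and T :: "'a set"
  assumes "proper_metric TYPE('a)" "geodesic_space TYPE('a)" "R + 1 < r"
    and "\<And>c. dist c p = r \<Longrightarrow>
           (\<exists>t\<in>T. outside_connected p R c t) \<or> (\<exists>M. \<forall>z. outside_connected p R c z \<longrightarrow> dist z p \<le> M)"
  shows "\<exists>L M. \<forall>y. dist y p = r \<longrightarrow>
           (\<exists>t\<in>T. \<exists>l\<le>L. path_outside p R l y t) \<or> (\<forall>z. outside_connected p R y z \<longrightarrow> dist z p \<le> M)"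
proof -
  have "\<forall>c. \<exists>V. dist c p = r \<longrightarrow>
      (\<exists>t\<in>T. \<exists>l\<le>V. path_outside p R l c t) \<or> (\<forall>z. outside_connected p R c z \<longrightarrow> dist z p \<le> V)"
    using assms(4) unfolding outside_connected_def by (metis order_refl)
  then obtain V where V: "\<And>c. dist c p = r \<Longrightarrow>
      (\<exists>t\<in>T. \<exists>l\<le>V c. path_outside p R l c t) \<or> (\<forall>z. outside_connected p R c z \<longrightarrow> dist z p \<le> V c)"
    by metis
  have "compact (cball p r \<inter> - ball p r)"
    using assms(1) unfolding proper_metric_def by (intro compact_Int_closed) auto
  moreover have "cball p r \<inter> - ball p r = sphere p r" by auto
  ultimately have "seq_compact (sphere p r)" by (simp add: compact_imp_seq_compact)
  then obtain N where N: "finite N" "N \<subseteq> sphere p r" "sphere p r \<subseteq> (\<Union>c\<in>N. ball c 1)"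
    using seq_compact_imp_totally_bounded[of "sphere p r"] by (meson zero_less_one)
  define W where "W = Max (insert 0 (V ` N))"
  have VW: "V c \<le> W" if "c \<in> N" for c unfolding W_def using N(1) that by auto
  have "(\<exists>t\<in>T. \<exists>l\<le>W + 1. path_outside p R l y t) \<or> (\<forall>z. outside_connected p R y z \<longrightarrow> dist z p \<le> W)"
    if y: "dist y p = r" for y
  proof -
    obtain c where c: "c \<in> N" "dist c y < 1" using y N(3) by (force simp: dist_commute)
    then have yc: "path_outside p R (dist y c) y c"
      using y assms(3) by (intro path_outside_short[OF assms(2)]) (auto simp: dist_commute)
    have "dist c p = r" using c N(2) by (auto simp: dist_commute)
    then show ?thesis
    proof (rule V[THEN disjE])
      assume "\<exists>t\<in>T. \<exists>l\<le>V c. path_outside p R l c t"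
      then obtain t l where "t \<in> T" "l \<le> V c" "path_outside p R l c t" by blast
      then show ?thesis
        using path_outside_join[OF yc] VW[OF c(1)] c(2) by (force simp: dist_commute)
    next
      assume bounded: "\<forall>z. outside_connected p R c z \<longrightarrow> dist z p \<le> V c"
      have "outside_connected p R c y"
        using yc outside_connected_sym unfolding outside_connected_def by blast
      then have "dist z p \<le> W" if "outside_connected p R y z" for z
        using bounded VW[OF c(1)] outside_connected_trans[OF _ that] by fastforce
      then show ?thesis by blast
    qed
  qed
  then show ?thesis by blast
qed

lemma far_points_reach_basepoint:
  fixes \<alpha> :: "real \<Rightarrow> 'a::metric_space"
  assumes "proper_metric TYPE('a)" "geodesic_space TYPE('a)"
    and "coarsely_path_connected TYPE('a)" "coarse_basepoint \<alpha>"
  shows "\<exists>\<gamma>. \<forall>R\<ge>0. R + 3 \<le> \<gamma> R \<and> (\<forall>x. \<gamma> R \<le> dist x (\<alpha> 0) \<longrightarrow>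
           (\<exists>s\<ge>0. \<exists>k\<le>2 * dist x (\<alpha> 0). path_outside (\<alpha> 0) R k x (\<alpha> s)))"
proof -
  define p where "p = \<alpha> 0"
  have dichotomy: "(\<exists>t\<in>\<alpha> ` {0..}. outside_connected p R c t) \<or>
      (\<exists>M. \<forall>z. outside_connected p R c z \<longrightarrow> dist z p \<le> M)" for R c
    using unbounded_outside_component_meets_basepoint[OF assms, of R c]
    unfolding p_def by (metis atLeast_iff image_eqI nle_le)
  have "\<exists>L M. \<forall>y. dist y p = R + 2 \<longrightarrow>
      (\<exists>t\<in>\<alpha> ` {0..}. \<exists>l\<le>L. path_outside p R l y t) \<or> (\<forall>z. outside_connected p R y z \<longrightarrow> dist z p \<le> M)"
    for R by (rule uniform_dichotomy_on_sphere[OF assms(1,2) _ dichotomy]) simp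
  then obtain L M where LM: "\<And>R y. dist y p = R + 2 \<Longrightarrow>
      (\<exists>t\<in>\<alpha> ` {0..}. \<exists>l\<le>L R. path_outside p R l y t) \<or> (\<forall>z. outside_connected p R y z \<longrightarrow> dist z p \<le> M R)"
    by metis
  define \<gamma> where "\<gamma> R = max (R + 3) (max (M R + 1) (L R))" for R
  have "\<exists>s\<ge>0. \<exists>k\<le>2 * dist x p. path_outside p R k x (\<alpha> s)"
    if R: "0 \<le> R" and x: "\<gamma> R \<le> dist x p" for R x
  proof -
    have \<gamma>R: "R + 3 \<le> \<gamma> R" "M R < \<gamma> R" "L R \<le> \<gamma> R" unfolding \<gamma>_def by auto
    obtain y where y: "dist y p = R + 2" "path_outside p R (dist x p - (R + 2)) x y"
      using path_outside_toward_center[OF assms(2), of "R + 2" R x p] R x \<gamma>R by auto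
    then have "outside_connected p R y x" "\<not> dist x p \<le> M R"
      using path_outside_reverse[OF y(2)] x \<gamma>R unfolding outside_connected_def by auto
    then obtain s l where s: "0 \<le> s" and l: "l \<le> L R" "path_outside p R l y (\<alpha> s)"
      using LM[OF y(1)] by auto
    have "path_outside p R (dist x p - (R + 2) + l) x (\<alpha> s)" by (rule path_outside_join[OF y(2) l(2)])
    moreover have "dist x p - (R + 2) + l \<le> 2 * dist x p" using l(1) R x \<gamma>R by linarith
    ultimately show ?thesis using s by blast
  qed
  moreover have "R + 3 \<le> \<gamma> R" for R unfolding \<gamma>_def by simp
  ultimately show ?thesis unfolding p_def by blast
qed

theorem lemma5p5:
  fixes \<alpha> :: "real \<Rightarrow> 'a::metric_space" and A :: "'a set"
  assumes "proper_metric TYPE('a)"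
    and "geodesic_space TYPE('a)"
    and "coarsely_path_connected TYPE('a)"
    and "coarse_basepoint \<alpha>"
    and "dispersed (\<alpha> 0) A"
  shows "\<exists>\<gamma> \<rho> :: real \<Rightarrow> real.
           (\<forall>t\<ge>0. \<gamma> t \<ge> 0 \<and> \<rho> t \<ge> 0) \<and>
           (\<forall>R>0. \<gamma> R > R) \<and>
           (\<forall>R>0. \<forall>x\<in>A - ball (\<alpha> 0) (\<gamma> R).
              \<exists>k h. k \<ge> 0 \<and> continuous_on {0..k} h \<and>
                h 0 = x \<and> h k \<in> \<alpha> ` {0..} \<and>
                (\<forall>t\<in>{0..k}. h t \<notin> ball (\<alpha> 0) R) \<and>
                bornologous_on {0..k} \<rho> h \<and>
                k \<le> 2 * dist x (\<alpha> 0))"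
proof -
  obtain \<gamma> where \<gamma>: "\<And>R. 0 \<le> R \<Longrightarrow> R + 3 \<le> \<gamma> R"
    "\<And>R x. 0 \<le> R \<Longrightarrow> \<gamma> R \<le> dist x (\<alpha> 0) \<Longrightarrow>
       \<exists>s\<ge>0. \<exists>k\<le>2 * dist x (\<alpha> 0). path_outside (\<alpha> 0) R k x (\<alpha> s)"
    using far_points_reach_basepoint[OF assms(1-4)] by metis
  have "\<exists>k h. k \<ge> 0 \<and> continuous_on {0..k} h \<and> h 0 = x \<and> h k \<in> \<alpha> ` {0..} \<and>
      (\<forall>t\<in>{0..k}. h t \<notin> ball (\<alpha> 0) R) \<and> bornologous_on {0..k} (\<lambda>t. t) h \<and> k \<le> 2 * dist x (\<alpha> 0)"
    if R: "0 < R" and x: "x \<in> A - ball (\<alpha> 0) (\<gamma> R)" for R x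
  proof -
    have "\<gamma> R \<le> dist x (\<alpha> 0)" using x by (simp add: dist_commute)
    then obtain s k where "0 \<le> s" "k \<le> 2 * dist x (\<alpha> 0)" "path_outside (\<alpha> 0) R k x (\<alpha> s)"
      using \<gamma>(2) R by (meson less_imp_le)
    moreover from this obtain h where h: "0 \<le> k" "h 0 = x" "h k = \<alpha> s"
        "1-lipschitz_on {0..k} h" "\<forall>t\<in>{0..k}. R < dist (h t) (\<alpha> 0)"
      unfolding path_outside_def by blast
    moreover have "continuous_on {0..k} h" using h(4) by (rule lipschitz_on_continuous_on)
    moreover have "bornologous_on {0..k} (\<lambda>t. t) h"
      unfolding bornologous_on_def using lipschitz_onD[OF h(4)] by simp
    moreover have "\<forall>t\<in>{0..k}. h t \<notin> ball (\<alpha> 0) R" using h(5) by (auto simp: dist_commute)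
    ultimately show ?thesis by blast
  qed
  moreover have "0 \<le> t \<Longrightarrow> 0 \<le> \<gamma> t" "0 < R \<Longrightarrow> R < \<gamma> R" for t R
    using \<gamma>(1)[of t] \<gamma>(1)[of R] by auto
  ultimately show ?thesis by - (rule exI[of _ \<gamma>], rule exI[of _ "\<lambda>t. t"], auto)
qed

end
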